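(* Let $G$ be a torsion-free abelian group and $H$ any group. Then every non-constant $\mathcal{T}\in\mathrm{GCA}(A^G,A^H)$ has the unique homomorphism property.
   Context: $A$ is a finite set with $|A|\ge 2$. $A^G$ is the set of functions $G\to A$ with shift action $(g\cdot x)(k):=x(g^{-1}k)$. For $\phi\in\mathrm{Hom}(H,G)$, a $\phi$-cellular automaton is a map $\mathcal{T}:A^G\to A^H$ for which there exist finite $T\subseteq G$ and $\mu:A^T\to A$ with $\mathcal{T}(x)(h)=\mu((\phi(h^{-1})\cdot x)|_T)$ for all $x,h$; $\mathrm{GCA}(A^G,A^H)$ is the set of all $\phi$-cellular automata $A^G\to A^H$ over all $\phi\in\mathrm{Hom}(H,G)$, and $\mathrm{CA}(A^G)$ is the set of $\mathrm{id}_G$-cellular automata. $\phi^*(x):=x\circ\phi$. $\mathcal{T}\in\mathrm{GCA}(A^G,A^H)$ has the unique homomorphism property (UHP) if $\mathcal{T}=\phi^*\circ\tau=\psi^*\circ\tau$ with $\phi,\psi\in\mathrm{Hom}(H,G)$, $\tau\in\mathrm{CA}(A^G)$ implies $\phi=\psi$ (every $\phi$-cellular automaton can be written as $\phi^*\circ\tau$ for a unique $\tau\in\mathrm{CA}(A^G)$). *)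

theory Defs
  imports "HOL-Library.FuncSet" "HOL-Library.Cardinality"
begin

text \<open>Groups are rendered via type classes: G is a type of class ab_group_add
 (abelian group, additive notation), H a type of class group_add (arbitrary group,
 written additively).\<close>

definition torsion_free :: "'g::group_add itself \<Rightarrow> bool" where
  "torsion_free _ \<longleftrightarrow> (\<forall>(g::'g) (n::nat). n > 0 \<and> ((\<lambda>y. g + y) ^^ n) 0 = 0 \<longrightarrow> g = 0)"

definition is_hom :: "('h::group_add \<Rightarrow> 'g::group_add) \<Rightarrow> bool" where
  "is_hom \<phi> \<longleftrightarrow> (\<forall>a b. \<phi> (a + b) = \<phi> a + \<phi> b)"

definition shift :: "'g::group_add \<Rightarrow> ('g \<Rightarrow> 'a) \<Rightarrow> ('g \<Rightarrow> 'a)" where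
  "shift g x = (\<lambda>k. x (- g + k))"

definition is_phi_CA :: "('h::group_add \<Rightarrow> 'g::group_add) \<Rightarrow> (('g \<Rightarrow> 'a) \<Rightarrow> ('h \<Rightarrow> 'a)) \<Rightarrow> bool" where
  "is_phi_CA \<phi> \<T> \<longleftrightarrow> (\<exists>S \<mu>. finite S \<and>
      (\<forall>x h. \<T> x h = \<mu> (restrict (shift (\<phi> (- h)) x) S)))"

definition GCA :: "(('g::group_add \<Rightarrow> 'a) \<Rightarrow> ('h::group_add \<Rightarrow> 'a)) set" where
  "GCA = {\<T>. \<exists>\<phi>. is_hom \<phi> \<and> is_phi_CA \<phi> \<T>}"

definition CA :: "(('g::group_add \<Rightarrow> 'a) \<Rightarrow> ('g \<Rightarrow> 'a)) set" where
  "CA = {\<tau>. is_phi_CA id \<tau>}"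

definition pullback :: "('h \<Rightarrow> 'g) \<Rightarrow> ('g \<Rightarrow> 'a) \<Rightarrow> ('h \<Rightarrow> 'a)" where
  "pullback \<phi> x = x \<circ> \<phi>"

definition UHP :: "(('g::group_add \<Rightarrow> 'a) \<Rightarrow> ('h::group_add \<Rightarrow> 'a)) \<Rightarrow> bool" where
  "UHP \<T> \<longleftrightarrow> (\<forall>\<phi> \<psi> \<tau>. is_hom \<phi> \<and> is_hom \<psi> \<and> \<tau> \<in> CA \<and>
      \<T> = pullback \<phi> \<circ> \<tau> \<and> \<T> = pullback \<psi> \<circ> \<tau> \<longrightarrow> \<phi> = \<psi>)"

end

theory Submission
  imports Defs
begin

text \<open>If \<open>\<phi>\<^sup>* \<circ> \<tau> = \<psi>\<^sup>* \<circ> \<tau>\<close> with \<open>\<phi> h \<noteq> \<psi> h\<close>, then by shift-equivariance every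
  configuration \<open>\<tau> x\<close> is periodic with period \<open>d = - \<psi> h + \<phi> h \<noteq> 0\<close>. In a torsion-free
  group the multiples of \<open>d\<close> form an infinite set of periods, so one of them, \<open>c\<close>, moves
  the finite neighbourhood \<open>S\<close> of \<open>\<tau>\<close> off itself. A configuration equal to \<open>y\<close> on \<open>S\<close> and to
  \<open>z\<close> on \<open>c + S\<close> then shows that the local rule takes the same value on \<open>y|\<^sub>S\<close> and \<open>z|\<^sub>S\<close>,
  so \<open>\<tau>\<close>, and with it \<open>\<T>\<close>, is constant.\<close>

lemma funpow_add_const:
  fixes d :: "'g::ab_group_add"
  shows "((\<lambda>y. d + y) ^^ n) y = y + ((\<lambda>y. d + y) ^^ n) 0"
  by (induction n) (auto simp: algebra_simps)

lemma funpow_add_const_add: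
  fixes d :: "'g::ab_group_add"
  shows "((\<lambda>y. d + y) ^^ (a + k)) 0 = ((\<lambda>y. d + y) ^^ a) 0 + ((\<lambda>y. d + y) ^^ k) 0"
  by (metis add.commute funpow_add comp_apply funpow_add_const)

lemma inj_funpow_add_const:
  fixes d :: "'g::ab_group_add"
  assumes "torsion_free TYPE('g)" and "d \<noteq> 0"
  shows "inj (\<lambda>n. ((\<lambda>y. d + y) ^^ n) 0)"
proof -
  have "((\<lambda>y. d + y) ^^ a) 0 \<noteq> ((\<lambda>y. d + y) ^^ (a + k)) 0" if "k > 0" for a k
    using assms that unfolding torsion_free_def funpow_add_const_add by auto
  then show ?thesis
    by (intro injI) (metis less_imp_add_positive linorder_neqE_nat)
qed

definition periods :: "(('g::group_add \<Rightarrow> 'a) \<Rightarrow> ('g \<Rightarrow> 'b)) \<Rightarrow> 'g set" where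
  "periods \<tau> = {c. \<forall>x k. \<tau> x (k + c) = \<tau> x k}"

lemma CA_local_rule:
  assumes "\<tau> \<in> CA"
  obtains S \<mu> where "finite S" and "\<And>x k. \<tau> x k = \<mu> (restrict (\<lambda>s. x (k + s)) S)"
  using assms unfolding CA_def is_phi_CA_def shift_def by auto

lemma CA_translate:
  assumes "\<tau> \<in> CA"
  shows "\<tau> x k = \<tau> (\<lambda>s. x (k + s)) 0"
  using assms by (rule CA_local_rule) (simp add: add.assoc)

lemma CA_coincidence_period:
  fixes \<tau> :: "('g::group_add \<Rightarrow> 'a) \<Rightarrow> ('g \<Rightarrow> 'a)"
  assumes "\<tau> \<in> CA" and "\<And>x. \<tau> x b = \<tau> x a"
  shows "- a + b \<in> periods \<tau>"
  unfolding periods_def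
proof (intro CollectI allI)
  fix y k
  define x :: "'g \<Rightarrow> 'a" where "x t = y (k + (- a + t))" for t
  have "\<tau> y (k + (- a + b)) = \<tau> (\<lambda>s. y (k + (- a + b) + s)) 0"
    by (rule CA_translate[OF assms(1)])
  also have "\<dots> = \<tau> (\<lambda>s. x (b + s)) 0" by (simp add: x_def add.assoc)
  also have "\<dots> = \<tau> x b" by (rule CA_translate[OF assms(1), symmetric])
  also have "\<dots> = \<tau> x a" by (rule assms(2))
  also have "\<dots> = \<tau> (\<lambda>s. x (a + s)) 0" by (rule CA_translate[OF assms(1)])
  also have "\<dots> = \<tau> (\<lambda>s. y (k + s)) 0" by (simp add: x_def add.assoc)
  also have "\<dots> = \<tau> y k" by (rule CA_translate[OF assms(1), symmetric])
  finally show "\<tau> y (k + (- a + b)) = \<tau> y k" .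
qed

lemma periods_add:
  assumes "c \<in> periods \<tau>" and "d \<in> periods \<tau>"
  shows "c + d \<in> periods \<tau>"
  using assms unfolding periods_def by (simp flip: add.assoc)

lemma funpow_add_const_periods:
  assumes "d \<in> periods \<tau>"
  shows "((\<lambda>y. d + y) ^^ n) 0 \<in> periods \<tau>"
proof (induction n)
  case (Suc n)
  then show ?case using periods_add[OF assms] by simp
qed (simp add: periods_def)

lemma CA_constant_if_infinite_periods:
  assumes "\<tau> \<in> CA" and "infinite (periods \<tau>)"
  shows "\<tau> x = \<tau> x'"
proof -
  obtain S \<mu> where S: "finite S" and \<tau>: "\<And>x k. \<tau> x k = \<mu> (restrict (\<lambda>s. x (k + s)) S)"
    using CA_local_rule[OF assms(1)] by blast
  define D where "D = (\<lambda>(t, s). t - s) ` (S \<times> S)"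
  have "finite D" unfolding D_def using S by (intro finite_imageI finite_cartesian_product)
  then have "infinite (periods \<tau> - D)" using assms(2) by (rule Diff_infinite_finite)
  then obtain c where c: "c \<in> periods \<tau>" and "c \<notin> D"
    using infinite_imp_nonempty by blast
  have disjoint: "c + s \<notin> S" if "s \<in> S" for s
  proof
    assume "c + s \<in> S"
    with that have "(\<lambda>(t, s). t - s) (c + s, s) \<in> D" unfolding D_def by (intro imageI) simp
    with \<open>c \<notin> D\<close> show False by simp
  qed
  have rule_const: "\<mu> (restrict y S) = \<mu> (restrict z S)" for y z
  proof -
    define w where "w t = (if t \<in> S then y t else z (- c + t))" for t
    have "\<mu> (restrict y S) = \<tau> w 0"
      unfolding \<tau> by (intro arg_cong[where f=\<mu>]) (auto simp: w_def restrict_def)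
    also have "\<dots> = \<tau> w c"
      using c[unfolded periods_def, simplified, rule_format, of w 0] by simp
    also have "\<dots> = \<mu> (restrict z S)"
      unfolding \<tau> by (intro arg_cong[where f=\<mu>])
        (auto simp: w_def restrict_def disjoint)
    finally show ?thesis .
  qed
  show ?thesis
  proof
    fix k
    show "\<tau> x k = \<tau> x' k" unfolding \<tau> by (rule rule_const)
  qed
qed

lemma CA_constant_if_nonzero_period:
  fixes \<tau> :: "('g::ab_group_add \<Rightarrow> 'a) \<Rightarrow> ('g \<Rightarrow> 'a)"
  assumes "torsion_free TYPE('g)" and "\<tau> \<in> CA" and "d \<in> periods \<tau>" and "d \<noteq> 0"
  shows "\<tau> x = \<tau> x'"
proof (rule CA_constant_if_infinite_periods[OF assms(2)])
  have "range (\<lambda>n. ((\<lambda>y. d + y) ^^ n) 0) \<subseteq> periods \<tau>"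
    using funpow_add_const_periods[OF assms(3)] by blast
  then show "infinite (periods \<tau>)"
    using inj_funpow_add_const[OF assms(1,4)] finite_imageD finite_subset by blast
qed

theorem corollary3p10:
  fixes \<T> :: "('g::ab_group_add \<Rightarrow> 'a::finite) \<Rightarrow> ('h::group_add \<Rightarrow> 'a)"
  assumes "CARD('a) \<ge> 2"
    and "torsion_free TYPE('g)"
    and "\<T> \<in> GCA"
    and "\<exists>x y. \<T> x \<noteq> \<T> y"
  shows "UHP \<T>"
  unfolding UHP_def
proof (intro allI impI ext, elim conjE)
  fix \<phi> \<psi> :: "'h \<Rightarrow> 'g" and \<tau> h
  assume \<tau>: "\<tau> \<in> CA" and \<phi>: "\<T> = pullback \<phi> \<circ> \<tau>" and \<psi>: "\<T> = pullback \<psi> \<circ> \<tau>"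
  show "\<phi> h = \<psi> h"
  proof (rule ccontr)
    assume "\<phi> h \<noteq> \<psi> h"
    moreover have "\<tau> x (\<phi> h) = \<tau> x (\<psi> h)" for x
      using \<phi> \<psi> by (metis comp_apply pullback_def)
    then have "- \<psi> h + \<phi> h \<in> periods \<tau>" by (rule CA_coincidence_period[OF \<tau>])
    ultimately have "\<tau> x = \<tau> y" for x y
      by (metis CA_constant_if_nonzero_period[OF assms(2) \<tau>] neg_eq_iff_add_eq_0 minus_minus)
    then have "\<T> x = \<T> y" for x y using \<phi> by (metis comp_apply)
    then show False using assms(4) by blast
  qed
qed

end
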